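(* Let $b<-1$ and let $\lambda_1>0$ be a constant such that $(\mathcal{L}\eta,\eta)\ge\lambda_1\|\eta\|^2_{H^1_\alpha}$ for all $\eta\in H^1_\alpha$ with $\int\eta Q'\,dx=\int\eta\,SQ\,dx=0$. Then there exists $\theta>0$ such that every $\eta\in H^1_\alpha$ satisfying $$\Big|\Big(\eta,\frac{SQ}{\|SQ\|_{L^2}}\Big)\Big|+\Big|\Big(\eta,\frac{Q'}{\|Q'\|_{L^2}}\Big)\Big|\le\theta\|\eta\|_{H^1_\alpha}$$ obeys $(\mathcal{L}\eta,\eta)\ge\frac{3\lambda_1}{4}\|\eta\|^2_{H^1_\alpha}$.
   Context: Throughout, $b<-1$, $\nu=-\frac{b+1}{2}>0$. Fix $A>0$, $x_*\in\mathbb{R}$; the lefton is $Q(x)=A\frac{1-b}{2}(\cosh\nu(x-x_* ))^{b/\nu}$. Set $k=(A\frac{1-b}{2})^{\frac1b+1}$, $\alpha=Q^{-\frac1b-2}$. $H^1_\alpha$ is $H^1(\mathbb{R})$ with norm $\|f\|^2_{H^1_\alpha}=\int(f^2+f_x^2)\alpha\,dx$. $(f,g)=\int fg\,dx$ is the $L^2$ inner product. $SQ=\frac{2k(1-b)}{b}Q^{-\frac1b}+\frac{2(b-1)}{b}Q$. $(\mathcal{L}\eta,\eta)=\frac{2k}{b^2}\int\eta_x^2\alpha\,dx-\frac{2k(b+1)}{b}\int\eta^2\alpha\,dx$. *)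

theory Defs
  imports "HOL-Analysis.Analysis"
begin

definition nu :: "real \<Rightarrow> real" where
  "nu b = - (b + 1) / 2"

definition Qf :: "real \<Rightarrow> real \<Rightarrow> real \<Rightarrow> real \<Rightarrow> real" where
  "Qf b A xs x = A * (1 - b) / 2 * (cosh (nu b * (x - xs))) powr (b / nu b)"

definition kc :: "real \<Rightarrow> real \<Rightarrow> real" where
  "kc b A = (A * (1 - b) / 2) powr (1 / b + 1)"

definition alpha :: "real \<Rightarrow> real \<Rightarrow> real \<Rightarrow> real \<Rightarrow> real" where
  "alpha b A xs x = Qf b A xs x powr (- 1 / b - 2)"

definition SQ :: "real \<Rightarrow> real \<Rightarrow> real \<Rightarrow> real \<Rightarrow> real" where
  "SQ b A xs x = 2 * kc b A * (1 - b) / b * Qf b A xs x powr (- 1 / b)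
                 + 2 * (b - 1) / b * Qf b A xs x"

definition dQ :: "real \<Rightarrow> real \<Rightarrow> real \<Rightarrow> real \<Rightarrow> real" where
  "dQ b A xs x = deriv (Qf b A xs) x"

definition L2inner :: "(real \<Rightarrow> real) \<Rightarrow> (real \<Rightarrow> real) \<Rightarrow> real" where
  "L2inner f g = (\<integral>x. f x * g x \<partial>lborel)"

definition L2norm :: "(real \<Rightarrow> real) \<Rightarrow> real" where
  "L2norm f = sqrt (\<integral>x. (f x)\<^sup>2 \<partial>lborel)"

text \<open>An element of H^1_alpha is represented by a function f together with its weak
  derivative g: f is the absolutely continuous representative, i.e.
  f y - f x = integral of g over [x,y]; f, g in L^2 and the weighted norm is finite.\<close>
definition H1_alpha :: "real \<Rightarrow> real \<Rightarrow> real \<Rightarrow> (real \<Rightarrow> real) \<Rightarrow> (real \<Rightarrow> real) \<Rightarrow> bool" where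
  "H1_alpha b A xs f g \<longleftrightarrow>
     g \<in> borel_measurable lborel \<and>
     (\<forall>x y. x \<le> y \<longrightarrow> set_integrable lborel {x..y} g \<and>
                        f y - f x = (LINT t:{x..y}|lborel. g t)) \<and>
     integrable lborel (\<lambda>x. (f x)\<^sup>2) \<and> integrable lborel (\<lambda>x. (g x)\<^sup>2) \<and>
     integrable lborel (\<lambda>x. ((f x)\<^sup>2 + (g x)\<^sup>2) * alpha b A xs x)"

definition H1a_norm2 :: "real \<Rightarrow> real \<Rightarrow> real \<Rightarrow> (real \<Rightarrow> real) \<Rightarrow> (real \<Rightarrow> real) \<Rightarrow> real" where
  "H1a_norm2 b A xs f g = (\<integral>x. ((f x)\<^sup>2 + (g x)\<^sup>2) * alpha b A xs x \<partial>lborel)"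

definition Lform :: "real \<Rightarrow> real \<Rightarrow> real \<Rightarrow> (real \<Rightarrow> real) \<Rightarrow> (real \<Rightarrow> real) \<Rightarrow> real" where
  "Lform b A xs f g =
     2 * kc b A / b\<^sup>2 * (\<integral>x. (g x)\<^sup>2 * alpha b A xs x \<partial>lborel)
     - 2 * kc b A * (b + 1) / b * (\<integral>x. (f x)\<^sup>2 * alpha b A xs x \<partial>lborel)"

end

(*
  Correct eta by an element w of H^1_alpha that has the same inner products with SQ and Q' and
  satisfies ||w||^2 <= K (|(eta, SQ)| + |(eta, Q')|)^2. Such w exist because the pair of these inner
  products ranges over a subspace of R^2, so w can be taken in the span of at most two fixed elements
  of H^1_alpha (SQ and Q' themselves need not lie in H^1_alpha: SQ^2 alpha is not integrable for
  b <= -3/2). The difference eta - w satisfies both orthogonality conditions, hence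
  (L(eta - w), eta - w) >= lambda1 ||eta - w||^2. As (L eta, eta) = c1 int eta_x^2 alpha
  - c2 int eta^2 alpha with c1, c2 >= 0, the pointwise bounds
  (1 - t) u^2 + (1 - 1/t) v^2 <= (u + v)^2 <= (1 + t) u^2 + (1 + 1/t) v^2 carry this over to eta,
  at the price of a small fraction of lambda1 and a multiple of ||w||^2. The hypothesis gives
  ||w||^2 <= K theta^2 (||SQ|| + ||Q'||)^2 ||eta||^2, which is absorbed once theta is small.
*)

theory Submission
  imports Defs
begin

lemma square_add_le:
  fixes t u v :: real
  assumes "t > 0"
  shows "(u + v)\<^sup>2 \<le> (1 + t) * u\<^sup>2 + (1 + 1/t) * v\<^sup>2"
proof -
  have "(1 + t) * u\<^sup>2 + (1 + 1/t) * v\<^sup>2 - (u + v)\<^sup>2 = (t * u - v)\<^sup>2 / t"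
    using assms by (simp add: field_simps power2_eq_square)
  then show ?thesis using assms by (metis diff_ge_0_iff_ge divide_nonneg_pos zero_le_power2)
qed

lemma square_add_ge:
  fixes t u v :: real
  assumes "t > 0"
  shows "(1 - t) * u\<^sup>2 + (1 - 1/t) * v\<^sup>2 \<le> (u + v)\<^sup>2"
proof -
  have "(u + v)\<^sup>2 - ((1 - t) * u\<^sup>2 + (1 - 1/t) * v\<^sup>2) = (t * u + v)\<^sup>2 / t"
    using assms by (simp add: field_simps power2_eq_square)
  then show ?thesis using assms by (metis diff_ge_0_iff_ge divide_nonneg_pos zero_le_power2)
qed

(* F and G stand for int eta^2 alpha and int eta_x^2 alpha; the suffix e marks the constrained
   part eta - w and the suffix w the correction w. *)
lemma perturbed_coercivity_arith:
  fixes lam c1 c2 t F G Fe Ge Fw Gw :: real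
  assumes lam: "lam > 0" and c: "c1 \<ge> 0" "c2 \<ge> 0"
    and t: "0 < t" "t \<le> 1/16" "2 * t * c2 \<le> lam / 16"
    and nonneg: "Fe \<ge> 0" "Ge \<ge> 0" "Fw \<ge> 0" "Gw \<ge> 0"
    and G_ge: "(1 - t) * Ge + (1 - 1/t) * Gw \<le> G"
    and F_le: "F \<le> (1 + t) * Fe + (1 + 1/t) * Fw"
    and G_le: "G \<le> (1 + t) * Ge + (1 + 1/t) * Gw"
    and coercive: "lam * (Fe + Ge) \<le> c1 * Ge - c2 * Fe"
    and small: "(lam + c1 + c2) * (1 + 1/t) * (Fw + Gw) \<le> lam / 16 * (F + G)"
  shows "3 * lam / 4 * (F + G) \<le> c1 * G - c2 * F"
proof -
  define s where "s = 1 + 1/t"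
  define Ne where "Ne = Fe + Ge"
  define W where "W = Fw + Gw"
  have "Fw / t \<ge> 0" using t nonneg by simp
  then have s: "s \<ge> 0" "(1 - 1/t) * Gw \<ge> - s * W" "(1 + 1/t) * Fw \<le> s * W"
    unfolding s_def W_def using t nonneg
    by (simp_all add: algebra_simps add_divide_distrib) (use \<open>Fw / t \<ge> 0\<close> in linarith)
  have "c1 * ((1 - t) * Ge - s * W) \<le> c1 * G"
    using G_ge s c by (intro mult_left_mono) auto
  moreover have "c2 * F \<le> c2 * ((1 + t) * Fe + s * W)"
    using F_le s c by (intro mult_left_mono) auto
  ultimately have main: "(1 - t) * (c1 * Ge - c2 * Fe) - 2 * t * c2 * Fe - (c1 + c2) * s * W \<le> c1 * G - c2 * F"
    by (simp add: algebra_simps)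
  have "(1 - t) * (lam * Ne) \<le> (1 - t) * (c1 * Ge - c2 * Fe)"
    using coercive t by (intro mult_left_mono) (auto simp: Ne_def)
  moreover have "2 * t * c2 * Fe \<le> lam / 16 * Ne"
    using t nonneg lam by (intro mult_mono) (auto simp: Ne_def)
  moreover have "t * (lam * Ne) \<le> 1/16 * (lam * Ne)"
    using t lam nonneg by (intro mult_right_mono) (auto simp: Ne_def)
  ultimately have bulk: "7/8 * (lam * Ne) \<le> (1 - t) * (c1 * Ge - c2 * Fe) - 2 * t * c2 * Fe"
    by (simp add: algebra_simps)
  have "lam * (F + G) \<le> lam * ((1 + t) * Ne + s * W)"
    using F_le G_le lam by (intro mult_left_mono) (auto simp: s_def Ne_def W_def algebra_simps add_divide_distrib)
  then have norm: "lam * (F + G) \<le> 17/16 * (lam * Ne) + lam * s * W"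
    using \<open>t * (lam * Ne) \<le> 1/16 * (lam * Ne)\<close> by (simp add: algebra_simps)
  have "lam * s * W + (c1 + c2) * s * W \<le> 1/16 * (lam * (F + G))"
    using small unfolding s_def[symmetric] W_def[symmetric] by (simp add: algebra_simps)
  moreover have "lam * s * W \<ge> 0" "(c1 + c2) * s * W \<ge> 0"
    using lam c s nonneg by (simp_all add: W_def)
  ultimately have "3/4 * (lam * (F + G)) \<le> c1 * G - c2 * F"
    using main bulk norm by linarith
  then show ?thesis by simp
qed

lemma correction_le_of_small_values:
  fixes K \<delta> S N Nw :: real
  assumes "K \<ge> 0" "\<delta> > 0" "N \<ge> 0" "S \<ge> 0"
    and small: "S \<le> sqrt (\<delta> / (K + 1)) * sqrt N" and Nw: "Nw \<le> K * S\<^sup>2"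
  shows "Nw \<le> \<delta> * N"
proof -
  have "K * S\<^sup>2 \<le> K * (sqrt (\<delta> / (K + 1)) * sqrt N)\<^sup>2"
    using assms by (intro mult_left_mono power_mono) auto
  also have "\<dots> = K / (K + 1) * \<delta> * N"
    using assms by (simp add: power_mult_distrib)
  also have "\<dots> \<le> 1 * \<delta> * N"
    using assms by (intro mult_right_mono) auto
  finally show ?thesis using Nw by simp
qed

section \<open>Prescribing the values of two linear functionals\<close>

locale linear_constraints =
  fixes V :: "(real \<Rightarrow> real) \<Rightarrow> (real \<Rightarrow> real) \<Rightarrow> bool"
    and l1 l2 :: "(real \<Rightarrow> real) \<Rightarrow> real"
    and N :: "(real \<Rightarrow> real) \<Rightarrow> (real \<Rightarrow> real) \<Rightarrow> real"
  assumes V_lincomb: "V f1 g1 \<Longrightarrow> V f2 g2 \<Longrightarrow> V (\<lambda>x. a * f1 x + c * f2 x) (\<lambda>x. a * g1 x + c * g2 x)"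
    and l1_lincomb: "V f1 g1 \<Longrightarrow> V f2 g2 \<Longrightarrow> l1 (\<lambda>x. a * f1 x + c * f2 x) = a * l1 f1 + c * l1 f2"
    and l2_lincomb: "V f1 g1 \<Longrightarrow> V f2 g2 \<Longrightarrow> l2 (\<lambda>x. a * f1 x + c * f2 x) = a * l2 f1 + c * l2 f2"
    and N_lincomb_le: "V f1 g1 \<Longrightarrow> V f2 g2 \<Longrightarrow>
      N (\<lambda>x. a * f1 x + c * f2 x) (\<lambda>x. a * g1 x + c * g2 x) \<le> 2 * a\<^sup>2 * N f1 g1 + 2 * c\<^sup>2 * N f2 g2"
    and N_nonneg: "V f g \<Longrightarrow> N f g \<ge> 0"
    and V_zero: "V (\<lambda>_. 0) (\<lambda>_. 0)"
begin

definition bounded_lifting :: "real \<Rightarrow> bool" where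
  "bounded_lifting K \<longleftrightarrow> (\<forall>f g. V f g \<longrightarrow> (\<exists>fw gw. V fw gw \<and> l1 fw = l1 f \<and> l2 fw = l2 f \<and>
      N fw gw \<le> K * (\<bar>l1 f\<bar> + \<bar>l2 f\<bar>)\<^sup>2))"

lemma N_lincomb_bound:
  assumes "V p1 q1" "V p2 q2" and "\<bar>a\<bar> \<le> B * S" "\<bar>c\<bar> \<le> B * S"
  shows "N (\<lambda>x. a * p1 x + c * p2 x) (\<lambda>x. a * q1 x + c * q2 x) \<le> 2 * B\<^sup>2 * (N p1 q1 + N p2 q2) * S\<^sup>2"
proof -
  have "a\<^sup>2 \<le> (B * S)\<^sup>2" "c\<^sup>2 \<le> (B * S)\<^sup>2"
    using power_mono[OF assms(3) abs_ge_zero, of 2] power_mono[OF assms(4) abs_ge_zero, of 2] by simp_all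
  then have "2 * a\<^sup>2 * N p1 q1 + 2 * c\<^sup>2 * N p2 q2 \<le> 2 * (B * S)\<^sup>2 * N p1 q1 + 2 * (B * S)\<^sup>2 * N p2 q2"
    using N_nonneg[OF assms(1)] N_nonneg[OF assms(2)] by (intro add_mono mult_right_mono) auto
  with N_lincomb_le[OF assms(1,2), of a c] show ?thesis
    by (simp add: algebra_simps)
qed

lemma bounded_lifting_nondegenerate:
  assumes V1: "V p1 q1" and V2: "V p2 q2" and det: "l1 p1 * l2 p2 - l1 p2 * l2 p1 \<noteq> 0"
  shows "\<exists>K\<ge>0. bounded_lifting K"
proof -
  define d where "d = l1 p1 * l2 p2 - l1 p2 * l2 p1"
  define B where "B = (\<bar>l1 p1\<bar> + \<bar>l2 p1\<bar> + \<bar>l1 p2\<bar> + \<bar>l2 p2\<bar>) / \<bar>d\<bar>"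
  have cross: "\<bar>u * v - w * z\<bar> \<le> B * (\<bar>u\<bar> + \<bar>w\<bar>) * \<bar>d\<bar>"
    if "\<bar>v\<bar> \<le> B * \<bar>d\<bar>" "\<bar>z\<bar> \<le> B * \<bar>d\<bar>" for u v w z
  proof -
    have "\<bar>u * v - w * z\<bar> \<le> \<bar>u\<bar> * \<bar>v\<bar> + \<bar>w\<bar> * \<bar>z\<bar>"
      by (simp add: abs_mult abs_triangle_ineq4[THEN order_trans])
    also have "\<dots> \<le> \<bar>u\<bar> * (B * \<bar>d\<bar>) + \<bar>w\<bar> * (B * \<bar>d\<bar>)"
      using that by (intro add_mono mult_left_mono) auto
    finally show ?thesis by (simp add: algebra_simps)
  qed
  have entries: "\<bar>l1 p1\<bar> \<le> B * \<bar>d\<bar>" "\<bar>l2 p1\<bar> \<le> B * \<bar>d\<bar>" "\<bar>l1 p2\<bar> \<le> B * \<bar>d\<bar>" "\<bar>l2 p2\<bar> \<le> B * \<bar>d\<bar>"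
    using det by (auto simp: B_def d_def)
  have "bounded_lifting (2 * B\<^sup>2 * (N p1 q1 + N p2 q2))"
    unfolding bounded_lifting_def
  proof (intro allI impI)
    fix f g assume "V f g"
    define a where "a = (l1 f * l2 p2 - l2 f * l1 p2) / d"
    define c where "c = (l2 f * l1 p1 - l1 f * l2 p1) / d"
    have "a * d = l1 f * l2 p2 - l2 f * l1 p2" "c * d = l2 f * l1 p1 - l1 f * l2 p1"
      using det by (simp_all add: a_def c_def d_def)
    then have solves: "a * l1 p1 + c * l1 p2 = l1 f" "a * l2 p1 + c * l2 p2 = l2 f"
      using det unfolding d_def by algebra+
    have coeffs: "\<bar>a\<bar> \<le> B * (\<bar>l1 f\<bar> + \<bar>l2 f\<bar>)" "\<bar>c\<bar> \<le> B * (\<bar>l1 f\<bar> + \<bar>l2 f\<bar>)"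
      using cross[OF entries(4,3), of "l1 f" "l2 f"] cross[OF entries(1,2), of "l2 f" "l1 f"] det
      by (simp_all add: a_def c_def d_def divide_le_eq add.commute)
    show "\<exists>fw gw. V fw gw \<and> l1 fw = l1 f \<and> l2 fw = l2 f \<and>
        N fw gw \<le> 2 * B\<^sup>2 * (N p1 q1 + N p2 q2) * (\<bar>l1 f\<bar> + \<bar>l2 f\<bar>)\<^sup>2"
      using V_lincomb[OF V1 V2, of a c] l1_lincomb[OF V1 V2, of a c] l2_lincomb[OF V1 V2, of a c]
        N_lincomb_bound[OF V1 V2 coeffs] solves by auto
  qed
  moreover have "2 * B\<^sup>2 * (N p1 q1 + N p2 q2) \<ge> 0"
    using N_nonneg[OF V1] N_nonneg[OF V2] by simp
  ultimately show ?thesis by blast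
qed

lemma bounded_lifting_degenerate:
  assumes rank1: "\<And>p1 q1 p2 q2. V p1 q1 \<Longrightarrow> V p2 q2 \<Longrightarrow> l1 p1 * l2 p2 - l1 p2 * l2 p1 = 0"
  shows "\<exists>K\<ge>0. bounded_lifting K"
proof -
  (* If all values vanish, p is 0; then r = 0 and s = 0 below, by the convention x / 0 = 0. *)
  obtain p q where Vp: "V p q"
    and spans: "\<And>f g. V f g \<Longrightarrow> l1 p = 0 \<Longrightarrow> l2 p = 0 \<Longrightarrow> l1 f = 0 \<and> l2 f = 0"
  proof (cases "\<exists>p q. V p q \<and> (l1 p \<noteq> 0 \<or> l2 p \<noteq> 0)")
    case True
    then show ?thesis using that by blast
  next
    case False
    then show ?thesis using that[OF V_zero] by blast
  qed
  define r where "r = (l1 p)\<^sup>2 + (l2 p)\<^sup>2"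
  define B where "B = (\<bar>l1 p\<bar> + \<bar>l2 p\<bar>) / r"
  have "bounded_lifting (2 * B\<^sup>2 * (N p q + N p q))"
    unfolding bounded_lifting_def
  proof (intro allI impI)
    fix f g assume Vf: "V f g"
    define s where "s = (l1 f * l1 p + l2 f * l2 p) / r"
    have solves: "s * l1 p = l1 f \<and> s * l2 p = l2 f"
    proof (cases "r = 0")
      case True
      then show ?thesis using spans[OF Vf] by (simp add: r_def)
    next
      case False
      have "l1 p * l2 f = l1 f * l2 p" using rank1[OF Vp Vf] by simp
      with False show ?thesis
        unfolding s_def r_def by (simp add: field_simps power2_eq_square)
    qed
    have "\<bar>l1 f * l1 p + l2 f * l2 p\<bar> \<le> (\<bar>l1 p\<bar> + \<bar>l2 p\<bar>) * (\<bar>l1 f\<bar> + \<bar>l2 f\<bar>)"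
      by (rule order_trans[OF abs_triangle_ineq]) (simp add: abs_mult algebra_simps)
    then have coeffs: "\<bar>s\<bar> \<le> B * (\<bar>l1 f\<bar> + \<bar>l2 f\<bar>)" "\<bar>0\<bar> \<le> B * (\<bar>l1 f\<bar> + \<bar>l2 f\<bar>)"
      by (simp_all add: s_def B_def r_def divide_right_mono)
    show "\<exists>fw gw. V fw gw \<and> l1 fw = l1 f \<and> l2 fw = l2 f \<and>
        N fw gw \<le> 2 * B\<^sup>2 * (N p q + N p q) * (\<bar>l1 f\<bar> + \<bar>l2 f\<bar>)\<^sup>2"
      using V_lincomb[OF Vp Vp, of s 0] l1_lincomb[OF Vp Vp, of s 0] l2_lincomb[OF Vp Vp, of s 0]
        N_lincomb_bound[OF Vp Vp coeffs] solves by auto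
  qed
  moreover have "2 * B\<^sup>2 * (N p q + N p q) \<ge> 0"
    using N_nonneg[OF Vp] by simp
  ultimately show ?thesis by blast
qed

lemma bounded_lifting_exists: "\<exists>K\<ge>0. bounded_lifting K"
  using bounded_lifting_nondegenerate bounded_lifting_degenerate by blast

end

lemma integrable_bound_nonneg:
  fixes f g :: "real \<Rightarrow> real"
  assumes "integrable lborel g" "f \<in> borel_measurable lborel"
    and "\<And>x. f x \<le> g x" "\<And>x. 0 \<le> f x"
  shows "integrable lborel f"
  using assms(1,2)
proof (rule Bochner_Integration.integrable_bound)
  show "AE x in lborel. norm (f x) \<le> norm (g x)"
    using assms(3,4) by (intro AE_I2) (metis abs_of_nonneg order_trans real_norm_def)
qed

lemma integrable_exp_neg_abs:
  fixes a :: real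
  assumes "a > 0"
  shows "integrable lborel (\<lambda>x. exp (- a * \<bar>x\<bar>))"
proof -
  have "(\<lambda>x. exp (- a * x)) integrable_on {0..}"
    using has_integral_exp_minus_to_infinity[OF assms] by blast
  then have "(\<lambda>x. exp (- a * x)) absolutely_integrable_on {0..}"
    by (rule nonnegative_absolutely_integrable_1) auto
  then have right: "integrable lborel (\<lambda>x. indicator {0..} x *\<^sub>R exp (- a * x))"
    by (simp add: set_integrable_def integrable_completion)
  have left: "integrable lborel (\<lambda>x. indicator {0..} (0 + (-1) * x) *\<^sub>R exp (- a * (0 + (-1) * x)))"
    by (rule lborel_integrable_real_affine[OF right]) auto
  have "integrable lborel (\<lambda>x. indicator {0..} x *\<^sub>R exp (- a * x)
      + indicator {0..} (0 + (-1) * x) *\<^sub>R exp (- a * (0 + (-1) * x)))"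
    using left right by auto
  then show ?thesis
    by (rule Bochner_Integration.integrable_bound) (auto split: split_indicator)
qed

lemma exp_abs_le_two_cosh: "exp \<bar>y\<bar> \<le> 2 * cosh (y::real)"
  unfolding cosh_def by (cases "y \<ge> 0") auto

lemma continuous_on_cosh_powr: "continuous_on UNIV (\<lambda>x. cosh (n * (x - x0)) powr (r::real))"
  by (intro continuous_intros) auto

lemma integrable_cosh_powr:
  fixes n r x0 :: real
  assumes n: "n > 0" and r: "r < 0"
  shows "integrable lborel (\<lambda>x. cosh (n * (x - x0)) powr r)"
proof -
  have "integrable lborel (\<lambda>x. exp (- (- r * n) * \<bar>(- x0) + 1 * x\<bar>))"
    by (rule lborel_integrable_real_affine[OF integrable_exp_neg_abs]) (use n r in \<open>auto simp: mult_neg_pos\<close>)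
  then have "integrable lborel (\<lambda>x. 2 powr - r * exp (r * n * \<bar>x - x0\<bar>))"
    by simp
  moreover have "(\<lambda>x. cosh (n * (x - x0)) powr r) \<in> borel_measurable lborel"
    using borel_measurable_continuous_onI[OF continuous_on_cosh_powr] by simp
  moreover have "cosh (n * (x - x0)) powr r \<le> 2 powr - r * exp (r * n * \<bar>x - x0\<bar>)" for x
  proof -
    have "cosh (n * (x - x0)) powr r \<le> (exp \<bar>n * (x - x0)\<bar> / 2) powr r"
      using exp_abs_le_two_cosh[of "n * (x - x0)"] r by (intro powr_mono2') (auto simp: mult.commute)
    also have "\<dots> = 2 powr - r * exp (r * n * \<bar>x - x0\<bar>)"
      using n unfolding abs_mult by (simp add: powr_divide exp_powr_real powr_minus_divide field_simps)
    finally show ?thesis .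
  qed
  ultimately show ?thesis
    by (rule integrable_bound_nonneg) simp
qed

lemma integrable_square_cosh_powr:
  fixes n r x0 :: real
  assumes "n > 0" "r < 0"
  shows "integrable lborel (\<lambda>x. (cosh (n * (x - x0)) powr r)\<^sup>2)"
  using integrable_cosh_powr[of n "2 * r" x0] assms
  by (simp add: power2_eq_square powr_add[symmetric])

definition weighted_norm2 :: "(real \<Rightarrow> real) \<Rightarrow> (real \<Rightarrow> real) \<Rightarrow> real" where
  "weighted_norm2 w u = (\<integral>x. (u x)\<^sup>2 * w x \<partial>lborel)"

lemma weighted_norm2_nonneg: "(\<And>x. w x \<ge> 0) \<Longrightarrow> weighted_norm2 w u \<ge> 0"
  unfolding weighted_norm2_def by (intro integral_nonneg_AE) auto

lemma weighted_norm2_le_lincomb: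
  assumes "integrable lborel (\<lambda>x. (u x)\<^sup>2 * w x)" "integrable lborel (\<lambda>x. (v x)\<^sup>2 * w x)"
    and "integrable lborel (\<lambda>x. (h x)\<^sup>2 * w x)"
    and w: "\<And>x. w x \<ge> 0" and pointwise: "\<And>x. (h x)\<^sup>2 \<le> p * (u x)\<^sup>2 + q * (v x)\<^sup>2"
  shows "weighted_norm2 w h \<le> p * weighted_norm2 w u + q * weighted_norm2 w v"
proof -
  have "weighted_norm2 w h \<le> (\<integral>x. p * ((u x)\<^sup>2 * w x) + q * ((v x)\<^sup>2 * w x) \<partial>lborel)"
    unfolding weighted_norm2_def
  proof (rule integral_mono)
    fix x
    show "(h x)\<^sup>2 * w x \<le> p * ((u x)\<^sup>2 * w x) + q * ((v x)\<^sup>2 * w x)"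
      using mult_right_mono[OF pointwise w] by (simp add: algebra_simps)
  qed (use assms in auto)
  also have "\<dots> = p * weighted_norm2 w u + q * weighted_norm2 w v"
    using assms by (simp add: weighted_norm2_def)
  finally show ?thesis .
qed

lemma weighted_norm2_ge_lincomb:
  assumes "integrable lborel (\<lambda>x. (u x)\<^sup>2 * w x)" "integrable lborel (\<lambda>x. (v x)\<^sup>2 * w x)"
    and "integrable lborel (\<lambda>x. (h x)\<^sup>2 * w x)"
    and w: "\<And>x. w x \<ge> 0" and pointwise: "\<And>x. p * (u x)\<^sup>2 + q * (v x)\<^sup>2 \<le> (h x)\<^sup>2"
  shows "p * weighted_norm2 w u + q * weighted_norm2 w v \<le> weighted_norm2 w h"
proof -
  have "p * weighted_norm2 w u + q * weighted_norm2 w v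
      = (\<integral>x. p * ((u x)\<^sup>2 * w x) + q * ((v x)\<^sup>2 * w x) \<partial>lborel)"
    using assms by (simp add: weighted_norm2_def)
  also have "\<dots> \<le> weighted_norm2 w h"
    unfolding weighted_norm2_def
  proof (rule integral_mono)
    fix x
    show "p * ((u x)\<^sup>2 * w x) + q * ((v x)\<^sup>2 * w x) \<le> (h x)\<^sup>2 * w x"
      using mult_right_mono[OF pointwise w] by (simp add: algebra_simps)
  qed (use assms in auto)
  finally show ?thesis .
qed

lemma integrable_weighted_square_lincomb:
  fixes u v w :: "real \<Rightarrow> real"
  assumes [measurable]: "u \<in> borel_measurable lborel" "v \<in> borel_measurable lborel"
    "w \<in> borel_measurable lborel"
    and w: "\<And>x. w x \<ge> 0"
    and "integrable lborel (\<lambda>x. (u x)\<^sup>2 * w x)" "integrable lborel (\<lambda>x. (v x)\<^sup>2 * w x)"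
  shows "integrable lborel (\<lambda>x. (a * u x + c * v x)\<^sup>2 * w x)"
proof (rule integrable_bound_nonneg)
  show "integrable lborel (\<lambda>x. 2 * a\<^sup>2 * ((u x)\<^sup>2 * w x) + 2 * c\<^sup>2 * ((v x)\<^sup>2 * w x))"
    using assms by simp
  show "(\<lambda>x. (a * u x + c * v x)\<^sup>2 * w x) \<in> borel_measurable lborel"
    by measurable
  show "(a * u x + c * v x)\<^sup>2 * w x \<le> 2 * a\<^sup>2 * ((u x)\<^sup>2 * w x) + 2 * c\<^sup>2 * ((v x)\<^sup>2 * w x)" for x
    using mult_right_mono[OF square_add_le[of 1 "a * u x" "c * v x"] w[of x]]
    by (simp add: algebra_simps)
qed (use w in simp)

lemma integrable_square_lincomb:
  fixes u v :: "real \<Rightarrow> real"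
  assumes "u \<in> borel_measurable lborel" "v \<in> borel_measurable lborel"
    and "integrable lborel (\<lambda>x. (u x)\<^sup>2)" "integrable lborel (\<lambda>x. (v x)\<^sup>2)"
  shows "integrable lborel (\<lambda>x. (a * u x + c * v x)\<^sup>2)"
  using integrable_weighted_square_lincomb[of u v "\<lambda>_. 1" a c] assms by simp

lemma integrable_mult_of_square_integrable:
  fixes f h :: "real \<Rightarrow> real"
  assumes [measurable]: "f \<in> borel_measurable lborel" "h \<in> borel_measurable lborel"
    and "integrable lborel (\<lambda>x. (f x)\<^sup>2)" "integrable lborel (\<lambda>x. (h x)\<^sup>2)"
  shows "integrable lborel (\<lambda>x. f x * h x)"
proof (rule Bochner_Integration.integrable_bound)
  show "integrable lborel (\<lambda>x. (f x)\<^sup>2 + (h x)\<^sup>2)"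
    using assms by simp
  show "(\<lambda>x. f x * h x) \<in> borel_measurable lborel"
    by measurable
  have "\<bar>f x * h x\<bar> \<le> (f x)\<^sup>2 + (h x)\<^sup>2" for x
  proof -
    have "0 \<le> (\<bar>f x\<bar> - \<bar>h x\<bar>)\<^sup>2" by simp
    then have "2 * \<bar>f x * h x\<bar> \<le> (f x)\<^sup>2 + (h x)\<^sup>2" by (simp add: power2_diff abs_mult)
    then show ?thesis using abs_ge_zero[of "f x * h x"] by linarith
  qed
  then show "AE x in lborel. norm (f x * h x) \<le> norm ((f x)\<^sup>2 + (h x)\<^sup>2)"
    by simp
qed

lemma L2inner_lincomb:
  assumes "integrable lborel (\<lambda>x. f1 x * h x)" "integrable lborel (\<lambda>x. f2 x * h x)"
  shows "L2inner (\<lambda>x. a * f1 x + c * f2 x) h = a * L2inner f1 h + c * L2inner f2 h"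
  using assms by (simp add: L2inner_def algebra_simps)

lemma L2norm_nonneg: "L2norm h \<ge> 0"
  by (simp add: L2norm_def)

lemma abs_L2inner_le_normalized:
  assumes "h \<in> borel_measurable lborel" "integrable lborel (\<lambda>x. (h x)\<^sup>2)"
  shows "\<bar>L2inner f h\<bar> \<le> L2norm h * \<bar>L2inner f (\<lambda>x. h x / L2norm h)\<bar>"
proof (cases "L2norm h = 0")
  case True
  then have "AE x in lborel. (h x)\<^sup>2 = 0"
    using integral_nonneg_eq_0_iff_AE[OF assms(2)] by (simp add: L2norm_def)
  then have "L2inner f h = 0"
    unfolding L2inner_def by (intro integral_eq_zero_AE) auto
  with True show ?thesis by simp
next
  case False
  with L2norm_nonneg[of h] show ?thesis
    by (simp add: L2inner_def)
qed

lemma abs_L2inner_sum_le: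
  assumes "h1 \<in> borel_measurable lborel" "integrable lborel (\<lambda>x. (h1 x)\<^sup>2)"
    and "h2 \<in> borel_measurable lborel" "integrable lborel (\<lambda>x. (h2 x)\<^sup>2)"
  shows "\<bar>L2inner f h1\<bar> + \<bar>L2inner f h2\<bar> \<le> (L2norm h1 + L2norm h2) *
    (\<bar>L2inner f (\<lambda>x. h1 x / L2norm h1)\<bar> + \<bar>L2inner f (\<lambda>x. h2 x / L2norm h2)\<bar>)"
proof -
  let ?a1 = "\<bar>L2inner f (\<lambda>x. h1 x / L2norm h1)\<bar>" and ?a2 = "\<bar>L2inner f (\<lambda>x. h2 x / L2norm h2)\<bar>"
  have "0 \<le> L2norm h1 * ?a2" "0 \<le> L2norm h2 * ?a1"
    by (simp_all add: L2norm_nonneg)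
  with abs_L2inner_le_normalized[OF assms(1,2), of f] abs_L2inner_le_normalized[OF assms(3,4), of f]
  show ?thesis by (simp add: algebra_simps)
qed

section \<open>The lefton and its derived profiles\<close>

lemma alpha_nonneg: "alpha b A xs x \<ge> 0"
  by (simp add: alpha_def)

lemma Qf_measurable [measurable]: "Qf b A xs \<in> borel_measurable borel"
  using borel_measurable_continuous_onI[OF continuous_on_cosh_powr[of "nu b" xs "b / nu b"]]
  by (simp add: Qf_def[abs_def])

lemma alpha_measurable [measurable]: "alpha b A xs \<in> borel_measurable borel"
  unfolding alpha_def by measurable

lemma SQ_measurable [measurable]: "SQ b A xs \<in> borel_measurable borel"
proof -
  have "(\<lambda>x. SQ b A xs x) \<in> borel_measurable borel"
    unfolding SQ_def by measurable
  then show ?thesis by simp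
qed

lemma SQ_square_integrable:
  assumes "b < -1" "A > 0"
  shows "integrable lborel (\<lambda>x. (SQ b A xs x)\<^sup>2)"
proof -
  define Q0 where "Q0 = A * (1 - b) / 2"
  define C where "C x = cosh (nu b * (x - xs))" for x
  have nu: "nu b > 0" using assms by (simp add: nu_def)
  have Q: "Qf b A xs x = Q0 * C x powr (b / nu b)" for x
    by (simp add: Qf_def Q0_def C_def)
  have "Q0 > 0" "C x > 0" for x using assms by (simp_all add: Q0_def C_def)
  then have "Qf b A xs x powr (-1 / b) = Q0 powr (-1 / b) * C x powr (-1 / nu b)" for x
    using assms by (simp add: Q powr_mult powr_powr)
  then have SQ: "SQ b A xs = (\<lambda>x. (2 * kc b A * (1 - b) / b * Q0 powr (-1 / b)) * C x powr (-1 / nu b)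
      + (2 * (b - 1) / b * Q0) * C x powr (b / nu b))"
    by (simp add: SQ_def Q fun_eq_iff)
  have "b / nu b < 0" using assms nu by (simp add: divide_neg_pos)
  then show ?thesis
    unfolding SQ C_def using nu borel_measurable_continuous_onI[OF continuous_on_cosh_powr]
    by (intro integrable_square_lincomb integrable_square_cosh_powr) auto
qed

lemma dQ_eq:
  "dQ b A xs x = A * (1 - b) / 2 * b * cosh (nu b * (x - xs)) powr (b / nu b - 1) * sinh (nu b * (x - xs))"
proof -
  have "(Qf b A xs has_real_derivative
      A * (1 - b) / 2 * (b / nu b * cosh (nu b * (x - xs)) powr (b / nu b - 1) * (sinh (nu b * (x - xs)) * nu b))) (at x)"
    unfolding Qf_def[abs_def] by (auto intro!: derivative_eq_intros)
  then show ?thesis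
    unfolding dQ_def by (rule DERIV_imp_deriv[THEN trans]) (cases "nu b = 0"; simp add: nu_def)
qed

lemma dQ_measurable [measurable]: "dQ b A xs \<in> borel_measurable borel"
proof -
  have "continuous_on UNIV (dQ b A xs)"
    unfolding dQ_eq[abs_def] by (intro continuous_intros) auto
  then show ?thesis by (rule borel_measurable_continuous_onI)
qed

lemma dQ_square_integrable:
  assumes "b < -1"
  shows "integrable lborel (\<lambda>x. (dQ b A xs x)\<^sup>2)"
proof -
  define K where "K = A * (1 - b) / 2 * b"
  define C where "C x = cosh (nu b * (x - xs))" for x
  have nu: "nu b > 0" using assms by (simp add: nu_def)
  have "\<bar>dQ b A xs x\<bar> \<le> \<bar>K\<bar> * C x powr (b / nu b)" for x
  proof -
    have "\<bar>sinh (nu b * (x - xs))\<bar> \<le> C x"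
      using sinh_le_cosh_real[of "nu b * (x - xs)"] sinh_le_cosh_real[of "- (nu b * (x - xs))"]
      by (simp add: C_def abs_le_iff)
    then have "\<bar>C x powr (b / nu b - 1) * sinh (nu b * (x - xs))\<bar> \<le> C x powr (b / nu b - 1) * C x"
      by (simp add: abs_mult mult_left_mono)
    also have "\<dots> = C x powr (b / nu b)"
      by (simp add: C_def powr_diff)
    finally show ?thesis
      by (simp add: dQ_eq K_def C_def abs_mult mult.assoc mult_left_mono)
  qed
  then have bound: "(dQ b A xs x)\<^sup>2 \<le> K\<^sup>2 * (C x powr (b / nu b))\<^sup>2" for x
    by (metis abs_ge_zero power2_abs power_mono power_mult_distrib)
  have "b / nu b < 0" using assms nu by (simp add: divide_neg_pos)
  then have "integrable lborel (\<lambda>x. K\<^sup>2 * (C x powr (b / nu b))\<^sup>2)"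
    unfolding C_def using nu by (intro integrable_mult_right integrable_square_cosh_powr)
  moreover have "(\<lambda>x. (dQ b A xs x)\<^sup>2) \<in> borel_measurable lborel"
    by measurable
  ultimately show ?thesis
    using bound by (rule integrable_bound_nonneg) simp
qed

lemma H1_alpha_continuous:
  assumes "H1_alpha b A xs f g"
  shows "continuous_on UNIV f"
proof -
  have "isCont f x0" for x0
  proof -
    have "set_integrable lborel {x0 - 1..x0 + 1} g"
      using assms by (simp add: H1_alpha_def)
    then have g: "g integrable_on {x0 - 1..x0 + 1}"
      by (rule set_borel_integral_eq_integral(1))
    have eq: "f (x0 - 1) + integral {x0 - 1..y} g = f y" if "y \<in> {x0 - 1..x0 + 1}" for y
    proof -
      have "set_integrable lborel {x0 - 1..y} g" "f y - f (x0 - 1) = (LINT t:{x0 - 1..y}|lborel. g t)"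
        using assms that by (simp_all add: H1_alpha_def)
      then show ?thesis by (simp add: set_borel_integral_eq_integral(2))
    qed
    have "continuous_on {x0 - 1..x0 + 1} (\<lambda>y. f (x0 - 1) + integral {x0 - 1..y} g)"
      by (intro continuous_intros indefinite_integral_continuous_1 g)
    then have "continuous_on {x0 - 1..x0 + 1} f"
      using eq by (rule continuous_on_eq)
    then show ?thesis
      by (rule continuous_on_interior) simp
  qed
  then show ?thesis by (simp add: continuous_at_imp_continuous_on)
qed

lemma H1_alpha_measurable:
  assumes "H1_alpha b A xs f g"
  shows "f \<in> borel_measurable lborel" "g \<in> borel_measurable lborel"
  using borel_measurable_continuous_onI[OF H1_alpha_continuous[OF assms]] assms
  by (simp_all add: H1_alpha_def)

lemma H1_alpha_weighted_integrable:
  assumes H: "H1_alpha b A xs f g"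
  shows "integrable lborel (\<lambda>x. (f x)\<^sup>2 * alpha b A xs x)" "integrable lborel (\<lambda>x. (g x)\<^sup>2 * alpha b A xs x)"
proof -
  note [measurable] = H1_alpha_measurable[OF H]
  have sum: "integrable lborel (\<lambda>x. ((f x)\<^sup>2 + (g x)\<^sup>2) * alpha b A xs x)"
    using H by (simp add: H1_alpha_def)
  have bound: "(f x)\<^sup>2 * alpha b A xs x \<le> ((f x)\<^sup>2 + (g x)\<^sup>2) * alpha b A xs x"
    "(g x)\<^sup>2 * alpha b A xs x \<le> ((f x)\<^sup>2 + (g x)\<^sup>2) * alpha b A xs x" for x
    by (simp_all add: alpha_nonneg mult_right_mono)
  show "integrable lborel (\<lambda>x. (f x)\<^sup>2 * alpha b A xs x)"
    by (rule integrable_bound_nonneg[OF sum], measurable) (simp_all add: bound alpha_nonneg)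
  show "integrable lborel (\<lambda>x. (g x)\<^sup>2 * alpha b A xs x)"
    by (rule integrable_bound_nonneg[OF sum], measurable) (simp_all add: bound alpha_nonneg)
qed

lemma H1a_norm2_eq:
  assumes "H1_alpha b A xs f g"
  shows "H1a_norm2 b A xs f g = weighted_norm2 (alpha b A xs) f + weighted_norm2 (alpha b A xs) g"
  using H1_alpha_weighted_integrable[OF assms]
  by (simp add: H1a_norm2_def weighted_norm2_def distrib_right)

lemma H1a_norm2_nonneg: "H1a_norm2 b A xs f g \<ge> 0"
  unfolding H1a_norm2_def by (intro integral_nonneg_AE) (simp add: alpha_nonneg)

lemma Lform_eq:
  "Lform b A xs f g = 2 * kc b A / b\<^sup>2 * weighted_norm2 (alpha b A xs) g
     - 2 * kc b A * (b + 1) / b * weighted_norm2 (alpha b A xs) f"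
  by (simp add: Lform_def weighted_norm2_def)

lemma H1_alpha_lincomb:
  assumes H1: "H1_alpha b A xs f1 g1" and H2: "H1_alpha b A xs f2 g2"
  shows "H1_alpha b A xs (\<lambda>x. a * f1 x + c * f2 x) (\<lambda>x. a * g1 x + c * g2 x)"
proof -
  note [measurable] = H1_alpha_measurable[OF H1] H1_alpha_measurable[OF H2]
  have antiderivative: "\<forall>x y. x \<le> y \<longrightarrow> set_integrable lborel {x..y} (\<lambda>t. a * g1 t + c * g2 t) \<and>
      (a * f1 y + c * f2 y) - (a * f1 x + c * f2 x) = (LINT t:{x..y}|lborel. a * g1 t + c * g2 t)"
  proof (intro allI impI)
    fix x y :: real assume "x \<le> y"
    have "set_integrable lborel {x..y} g1" "f1 y - f1 x = (LINT t:{x..y}|lborel. g1 t)"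
      "set_integrable lborel {x..y} g2" "f2 y - f2 x = (LINT t:{x..y}|lborel. g2 t)"
      using H1 H2 \<open>x \<le> y\<close> by (auto simp: H1_alpha_def)
    then show "set_integrable lborel {x..y} (\<lambda>t. a * g1 t + c * g2 t) \<and>
      (a * f1 y + c * f2 y) - (a * f1 x + c * f2 x) = (LINT t:{x..y}|lborel. a * g1 t + c * g2 t)"
      by (simp add: algebra_simps)
  qed
  have "integrable lborel (\<lambda>x. (a * f1 x + c * f2 x)\<^sup>2 * alpha b A xs x)"
    "integrable lborel (\<lambda>x. (a * g1 x + c * g2 x)\<^sup>2 * alpha b A xs x)"
    using H1_alpha_measurable[OF H1] H1_alpha_measurable[OF H2] alpha_nonneg
      H1_alpha_weighted_integrable[OF H1] H1_alpha_weighted_integrable[OF H2]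
    by (simp_all add: integrable_weighted_square_lincomb)
  then have weighted: "integrable lborel
      (\<lambda>x. ((a * f1 x + c * f2 x)\<^sup>2 + (a * g1 x + c * g2 x)\<^sup>2) * alpha b A xs x)"
    by (simp add: distrib_right)
  have squares: "integrable lborel (\<lambda>x. (a * f1 x + c * f2 x)\<^sup>2)"
    "integrable lborel (\<lambda>x. (a * g1 x + c * g2 x)\<^sup>2)"
    using H1_alpha_measurable[OF H1] H1_alpha_measurable[OF H2] H1 H2
    by (simp_all add: integrable_square_lincomb H1_alpha_def)
  have "(\<lambda>x. a * g1 x + c * g2 x) \<in> borel_measurable lborel"
    by measurable
  with antiderivative weighted squares show ?thesis
    unfolding H1_alpha_def by (intro conjI) assumption+
qed

lemma H1a_norm2_lincomb_le:
  assumes H1: "H1_alpha b A xs f1 g1" and H2: "H1_alpha b A xs f2 g2"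
  shows "H1a_norm2 b A xs (\<lambda>x. a * f1 x + c * f2 x) (\<lambda>x. a * g1 x + c * g2 x)
     \<le> 2 * a\<^sup>2 * H1a_norm2 b A xs f1 g1 + 2 * c\<^sup>2 * H1a_norm2 b A xs f2 g2"
proof -
  have pointwise: "(a * u + c * v)\<^sup>2 \<le> 2 * a\<^sup>2 * u\<^sup>2 + 2 * c\<^sup>2 * v\<^sup>2" for u v :: real
    using square_add_le[of 1 "a * u" "c * v"] by (simp add: power_mult_distrib)
  note H = H1_alpha_lincomb[OF H1 H2, of a c]
  note int = H1_alpha_weighted_integrable[OF H1] H1_alpha_weighted_integrable[OF H2]
    H1_alpha_weighted_integrable[OF H]
  show ?thesis
    using weighted_norm2_le_lincomb[OF int(1,3,5) alpha_nonneg pointwise]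
      weighted_norm2_le_lincomb[OF int(2,4,6) alpha_nonneg pointwise]
    by (simp add: H1a_norm2_eq H1 H2 H algebra_simps)
qed

lemma H1_alpha_L2inner_lincomb:
  assumes "H1_alpha b A xs f1 g1" "H1_alpha b A xs f2 g2"
    and "h \<in> borel_measurable lborel" "integrable lborel (\<lambda>x. (h x)\<^sup>2)"
  shows "L2inner (\<lambda>x. a * f1 x + c * f2 x) h = a * L2inner f1 h + c * L2inner f2 h"
proof -
  have "integrable lborel (\<lambda>x. f x * h x)" if "H1_alpha b A xs f g" for f g
    using that by (intro integrable_mult_of_square_integrable H1_alpha_measurable(1)[OF that] assms(3,4))
      (simp add: H1_alpha_def)
  from this[OF assms(1)] this[OF assms(2)] show ?thesis
    by (rule L2inner_lincomb)
qed

lemma H1_alpha_bounded_lifting: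
  assumes "h1 \<in> borel_measurable lborel" "integrable lborel (\<lambda>x. (h1 x)\<^sup>2)"
    and "h2 \<in> borel_measurable lborel" "integrable lborel (\<lambda>x. (h2 x)\<^sup>2)"
  obtains K where "K \<ge> 0"
    and "\<And>f g. H1_alpha b A xs f g \<Longrightarrow> \<exists>fw gw. H1_alpha b A xs fw gw
      \<and> L2inner fw h1 = L2inner f h1 \<and> L2inner fw h2 = L2inner f h2
      \<and> H1a_norm2 b A xs fw gw \<le> K * (\<bar>L2inner f h1\<bar> + \<bar>L2inner f h2\<bar>)\<^sup>2"
proof -
  have "H1_alpha b A xs (\<lambda>_. 0) (\<lambda>_. 0)"
    by (simp add: H1_alpha_def set_integrable_def)
  then interpret linear_constraints "H1_alpha b A xs" "\<lambda>f. L2inner f h1" "\<lambda>f. L2inner f h2" "H1a_norm2 b A xs"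
    by unfold_locales (blast intro: H1_alpha_lincomb H1a_norm2_lincomb_le H1a_norm2_nonneg
        H1_alpha_L2inner_lincomb[OF _ _ assms(1,2)] H1_alpha_L2inner_lincomb[OF _ _ assms(3,4)])+
  from bounded_lifting_exists that show thesis
    unfolding bounded_lifting_def by blast
qed

section \<open>Stability of the coercivity estimate\<close>

lemma Lform_coefficients_nonneg:
  assumes "b < -1"
  shows "2 * kc b A / b\<^sup>2 \<ge> 0" "2 * kc b A * (b + 1) / b \<ge> 0"
proof -
  have "kc b A \<ge> 0" by (simp add: kc_def)
  moreover have "(b + 1) / b > 0" using assms by (simp add: divide_neg_neg)
  moreover have "2 * kc b A * (b + 1) / b = (2 * kc b A) * ((b + 1) / b)"
    by (simp only: times_divide_eq_right)
  ultimately show "2 * kc b A / b\<^sup>2 \<ge> 0" "2 * kc b A * (b + 1) / b \<ge> 0"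
    by (simp_all del: times_divide_eq_right)
qed

lemma weighted_norm2_perturbation_bounds:
  assumes H: "H1_alpha b A xs f g" and Hw: "H1_alpha b A xs fw gw" and t: "t > 0"
  shows "(1 - t) * weighted_norm2 (alpha b A xs) (\<lambda>x. g x - gw x) + (1 - 1/t) * weighted_norm2 (alpha b A xs) gw
      \<le> weighted_norm2 (alpha b A xs) g"
    and "weighted_norm2 (alpha b A xs) f
      \<le> (1 + t) * weighted_norm2 (alpha b A xs) (\<lambda>x. f x - fw x) + (1 + 1/t) * weighted_norm2 (alpha b A xs) fw"
    and "weighted_norm2 (alpha b A xs) g
      \<le> (1 + t) * weighted_norm2 (alpha b A xs) (\<lambda>x. g x - gw x) + (1 + 1/t) * weighted_norm2 (alpha b A xs) gw"
proof -
  have "H1_alpha b A xs (\<lambda>x. f x - fw x) (\<lambda>x. g x - gw x)"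
    using H1_alpha_lincomb[OF H Hw, of 1 "-1"] by simp
  note int = H1_alpha_weighted_integrable[OF H] H1_alpha_weighted_integrable[OF Hw]
    H1_alpha_weighted_integrable[OF this]
  show "(1 - t) * weighted_norm2 (alpha b A xs) (\<lambda>x. g x - gw x) + (1 - 1/t) * weighted_norm2 (alpha b A xs) gw
      \<le> weighted_norm2 (alpha b A xs) g"
    by (rule weighted_norm2_ge_lincomb[OF int(6,4,2) alpha_nonneg])
      (metis diff_add_cancel square_add_ge[OF t])
  show "weighted_norm2 (alpha b A xs) f
      \<le> (1 + t) * weighted_norm2 (alpha b A xs) (\<lambda>x. f x - fw x) + (1 + 1/t) * weighted_norm2 (alpha b A xs) fw"
    by (rule weighted_norm2_le_lincomb[OF int(5,3,1) alpha_nonneg])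
      (metis diff_add_cancel square_add_le[OF t])
  show "weighted_norm2 (alpha b A xs) g
      \<le> (1 + t) * weighted_norm2 (alpha b A xs) (\<lambda>x. g x - gw x) + (1 + 1/t) * weighted_norm2 (alpha b A xs) gw"
    by (rule weighted_norm2_le_lincomb[OF int(6,4,2) alpha_nonneg])
      (metis diff_add_cancel square_add_le[OF t])
qed

lemma Lform_coercivity_stable:
  assumes hb: "b < -1" and lam: "lam > 0"
  obtains \<delta> where "\<delta> > 0"
    and "\<And>f g fw gw. H1_alpha b A xs f g \<Longrightarrow> H1_alpha b A xs fw gw \<Longrightarrow>
      lam * H1a_norm2 b A xs (\<lambda>x. f x - fw x) (\<lambda>x. g x - gw x)
        \<le> Lform b A xs (\<lambda>x. f x - fw x) (\<lambda>x. g x - gw x) \<Longrightarrow>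
      H1a_norm2 b A xs fw gw \<le> \<delta> * H1a_norm2 b A xs f g \<Longrightarrow>
      3 * lam / 4 * H1a_norm2 b A xs f g \<le> Lform b A xs f g"
proof -
  define c1 where "c1 = 2 * kc b A / b\<^sup>2"
  define c2 where "c2 = 2 * kc b A * (b + 1) / b"
  have c: "c1 \<ge> 0" "c2 \<ge> 0"
    unfolding c1_def c2_def by (fact Lform_coefficients_nonneg[OF hb])+
  define t where "t = min (1/16) (lam / (32 * (c2 + 1)))"
  have t: "0 < t" "t \<le> 1/16" "2 * t * c2 \<le> lam / 16"
  proof -
    show "0 < t" using lam c by (simp add: t_def)
    show "t \<le> 1/16" unfolding t_def by (rule min.cobounded1)
    have "t \<le> lam / (32 * (c2 + 1))" unfolding t_def by (rule min.cobounded2)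
    with c \<open>0 < t\<close> show "2 * t * c2 \<le> lam / 16"
      by (simp add: pos_le_divide_eq algebra_simps)
  qed
  define S where "S = (lam + c1 + c2) * (1 + 1/t)"
  have S: "S > 0"
    unfolding S_def using lam c t by (intro mult_pos_pos) (simp_all add: field_simps)
  define \<delta> where "\<delta> = lam / (16 * S)"
  have S_\<delta>: "S * \<delta> = lam / 16"
    using S by (simp add: \<delta>_def)
  show thesis
  proof (rule that)
    show "\<delta> > 0" using lam S by (simp add: \<delta>_def)
    fix f g fw gw
    assume H: "H1_alpha b A xs f g" and Hw: "H1_alpha b A xs fw gw"
      and coercive: "lam * H1a_norm2 b A xs (\<lambda>x. f x - fw x) (\<lambda>x. g x - gw x)
        \<le> Lform b A xs (\<lambda>x. f x - fw x) (\<lambda>x. g x - gw x)"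
      and small: "H1a_norm2 b A xs fw gw \<le> \<delta> * H1a_norm2 b A xs f g"
    let ?N = "weighted_norm2 (alpha b A xs)"
    have He: "H1_alpha b A xs (\<lambda>x. f x - fw x) (\<lambda>x. g x - gw x)"
      using H1_alpha_lincomb[OF H Hw, of 1 "-1"] by simp
    note N_nonneg = weighted_norm2_nonneg[of "alpha b A xs", OF alpha_nonneg]
    note bounds = weighted_norm2_perturbation_bounds[OF H Hw t(1)]
    have "lam * (?N (\<lambda>x. f x - fw x) + ?N (\<lambda>x. g x - gw x))
        \<le> c1 * ?N (\<lambda>x. g x - gw x) - c2 * ?N (\<lambda>x. f x - fw x)"
      using coercive by (simp add: H1a_norm2_eq[OF He] Lform_eq c1_def c2_def)
    moreover have "S * (?N fw + ?N gw) \<le> lam / 16 * (?N f + ?N g)"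
      using mult_left_mono[OF small less_imp_le[OF S]]
      by (simp add: H1a_norm2_eq H Hw mult.assoc[symmetric] S_\<delta>)
    ultimately have "3 * lam / 4 * (?N f + ?N g) \<le> c1 * ?N g - c2 * ?N f"
      unfolding S_def
      by (rule perturbed_coercivity_arith[OF lam c t N_nonneg N_nonneg N_nonneg N_nonneg bounds])
    then show "3 * lam / 4 * H1a_norm2 b A xs f g \<le> Lform b A xs f g"
      by (simp add: H1a_norm2_eq[OF H] Lform_eq c1_def c2_def)
  qed
qed

lemma Lform_coercive_near_kernel:
  assumes hb: "b < -1" and lam: "lam > 0"
    and h1: "h1 \<in> borel_measurable lborel" "integrable lborel (\<lambda>x. (h1 x)\<^sup>2)"
    and h2: "h2 \<in> borel_measurable lborel" "integrable lborel (\<lambda>x. (h2 x)\<^sup>2)"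
    and coercive: "\<And>f g. H1_alpha b A xs f g \<Longrightarrow> L2inner f h1 = 0 \<Longrightarrow> L2inner f h2 = 0 \<Longrightarrow>
      lam * H1a_norm2 b A xs f g \<le> Lform b A xs f g"
  shows "\<exists>\<theta>>0. \<forall>f g. H1_alpha b A xs f g \<longrightarrow>
      \<bar>L2inner f h1\<bar> + \<bar>L2inner f h2\<bar> \<le> \<theta> * sqrt (H1a_norm2 b A xs f g) \<longrightarrow>
      3 * lam / 4 * H1a_norm2 b A xs f g \<le> Lform b A xs f g"
proof -
  obtain \<delta> where \<delta>: "\<delta> > 0" and stable: "\<And>f g fw gw. H1_alpha b A xs f g \<Longrightarrow> H1_alpha b A xs fw gw \<Longrightarrow>
      lam * H1a_norm2 b A xs (\<lambda>x. f x - fw x) (\<lambda>x. g x - gw x)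
        \<le> Lform b A xs (\<lambda>x. f x - fw x) (\<lambda>x. g x - gw x) \<Longrightarrow>
      H1a_norm2 b A xs fw gw \<le> \<delta> * H1a_norm2 b A xs f g \<Longrightarrow>
      3 * lam / 4 * H1a_norm2 b A xs f g \<le> Lform b A xs f g"
    using Lform_coercivity_stable[OF hb lam, where A = A and xs = xs] by blast
  obtain K where K: "K \<ge> 0" and lift: "\<And>f g. H1_alpha b A xs f g \<Longrightarrow> \<exists>fw gw. H1_alpha b A xs fw gw
      \<and> L2inner fw h1 = L2inner f h1 \<and> L2inner fw h2 = L2inner f h2
      \<and> H1a_norm2 b A xs fw gw \<le> K * (\<bar>L2inner f h1\<bar> + \<bar>L2inner f h2\<bar>)\<^sup>2"
    using H1_alpha_bounded_lifting[OF h1 h2, where b = b and A = A and xs = xs] by blast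
  show ?thesis
  proof (intro exI[of _ "sqrt (\<delta> / (K + 1))"] conjI allI impI)
    show "sqrt (\<delta> / (K + 1)) > 0" using \<delta> K by simp
    fix f g
    assume H: "H1_alpha b A xs f g"
      and small: "\<bar>L2inner f h1\<bar> + \<bar>L2inner f h2\<bar> \<le> sqrt (\<delta> / (K + 1)) * sqrt (H1a_norm2 b A xs f g)"
    obtain fw gw where Hw: "H1_alpha b A xs fw gw"
      and same: "L2inner fw h1 = L2inner f h1" "L2inner fw h2 = L2inner f h2"
      and Nw: "H1a_norm2 b A xs fw gw \<le> K * (\<bar>L2inner f h1\<bar> + \<bar>L2inner f h2\<bar>)\<^sup>2"
      using lift[OF H] by blast
    have "H1a_norm2 b A xs fw gw \<le> \<delta> * H1a_norm2 b A xs f g"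
      by (rule correction_le_of_small_values[OF K \<delta> H1a_norm2_nonneg _ small Nw]) simp
    moreover have "lam * H1a_norm2 b A xs (\<lambda>x. f x - fw x) (\<lambda>x. g x - gw x)
        \<le> Lform b A xs (\<lambda>x. f x - fw x) (\<lambda>x. g x - gw x)"
      using coercive H1_alpha_lincomb[OF H Hw, of 1 "-1"] same
        H1_alpha_L2inner_lincomb[OF H Hw h1, of 1 "-1"] H1_alpha_L2inner_lincomb[OF H Hw h2, of 1 "-1"]
      by simp
    ultimately show "3 * lam / 4 * H1a_norm2 b A xs f g \<le> Lform b A xs f g"
      using stable[OF H Hw] by blast
  qed
qed

theorem lemma2p6:
  fixes b A xs lambda1 :: real
  assumes hb: "b < -1" and hA: "A > 0" and hl: "lambda1 > 0"
    and coerc: "\<And>f g. H1_alpha b A xs f g \<Longrightarrow>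
                  L2inner f (dQ b A xs) = 0 \<Longrightarrow>
                  L2inner f (SQ b A xs) = 0 \<Longrightarrow>
                  Lform b A xs f g \<ge> lambda1 * H1a_norm2 b A xs f g"
  shows "\<exists>\<theta>>0. \<forall>f g. H1_alpha b A xs f g \<longrightarrow>
           \<bar>L2inner f (\<lambda>x. SQ b A xs x / L2norm (SQ b A xs))\<bar>
           + \<bar>L2inner f (\<lambda>x. dQ b A xs x / L2norm (dQ b A xs))\<bar>
             \<le> \<theta> * sqrt (H1a_norm2 b A xs f g) \<longrightarrow>
           Lform b A xs f g \<ge> 3 * lambda1 / 4 * H1a_norm2 b A xs f g"
proof -
  have "SQ b A xs \<in> borel_measurable lborel" "dQ b A xs \<in> borel_measurable lborel"
    by (simp_all add: SQ_measurable dQ_measurable)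
  note profiles = this(1) SQ_square_integrable[OF hb hA] this(2) dQ_square_integrable[OF hb]
  have "\<exists>\<theta>>0. \<forall>f g. H1_alpha b A xs f g \<longrightarrow>
      \<bar>L2inner f (SQ b A xs)\<bar> + \<bar>L2inner f (dQ b A xs)\<bar> \<le> \<theta> * sqrt (H1a_norm2 b A xs f g) \<longrightarrow>
      3 * lambda1 / 4 * H1a_norm2 b A xs f g \<le> Lform b A xs f g"
    by (rule Lform_coercive_near_kernel[OF hb hl profiles]) (rule coerc)
  then obtain \<theta> where \<theta>: "\<theta> > 0" and near_kernel: "\<And>f g. H1_alpha b A xs f g \<Longrightarrow>
      \<bar>L2inner f (SQ b A xs)\<bar> + \<bar>L2inner f (dQ b A xs)\<bar> \<le> \<theta> * sqrt (H1a_norm2 b A xs f g) \<Longrightarrow>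
      3 * lambda1 / 4 * H1a_norm2 b A xs f g \<le> Lform b A xs f g"
    by blast
  define M where "M = L2norm (SQ b A xs) + L2norm (dQ b A xs)"
  have M: "M \<ge> 0" by (simp add: M_def L2norm_nonneg)
  show ?thesis
  proof (intro exI[of _ "\<theta> / (M + 1)"] conjI allI impI)
    show "\<theta> / (M + 1) > 0" using \<theta> M by simp
    fix f g
    assume H: "H1_alpha b A xs f g"
      and small: "\<bar>L2inner f (\<lambda>x. SQ b A xs x / L2norm (SQ b A xs))\<bar>
        + \<bar>L2inner f (\<lambda>x. dQ b A xs x / L2norm (dQ b A xs))\<bar> \<le> \<theta> / (M + 1) * sqrt (H1a_norm2 b A xs f g)"
    have "\<bar>L2inner f (SQ b A xs)\<bar> + \<bar>L2inner f (dQ b A xs)\<bar> \<le> M * (\<theta> / (M + 1) * sqrt (H1a_norm2 b A xs f g))"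
      using abs_L2inner_sum_le[OF profiles, of f] mult_left_mono[OF small M] by (simp add: M_def)
    also have "\<dots> = M / (M + 1) * (\<theta> * sqrt (H1a_norm2 b A xs f g))"
      by simp
    also have "\<dots> \<le> \<theta> * sqrt (H1a_norm2 b A xs f g)"
      using \<theta> M H1a_norm2_nonneg by (intro mult_left_le_one_le) auto
    finally show "Lform b A xs f g \<ge> 3 * lambda1 / 4 * H1a_norm2 b A xs f g"
      using near_kernel[OF H] by simp
  qed
qed

end
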